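(* Let $T$ be a bounded linear operator on a complex separable infinite-dimensional Hilbert space $\mathcal{H}$ admitting a $\mathbb{T}$-eigenvector field $E$ which is $\alpha$-H\"olderian for some $\alpha\in(0,1]$, and let $R$ be the operator defined from $E$ in the context. There exists a positive constant $C(E,\alpha)$ depending only on $E$ and $\alpha$ such that for all $x,y\in\mathcal{H}$, $$|\langle RT^{*n}x,y\rangle|\le\frac{C(E,\alpha)\,\|x\|\,\|y\|}{n^{\alpha}}$$ for every positive integer $n$.
   Context: The inner product is linear in the second variable, conjugate-linear in the first. $\mathbb{T}$ is the unit circle, $\mu$ normalized Lebesgue measure. A $\mathbb{T}$-eigenvector field is a bounded map $E:\mathbb{T}\to\mathcal{H}$ with $TE(\lambda)=\lambda E(\lambda)$ for all $\lambda$; it is $\alpha$-H\"olderian if there is $C(E)>0$ with $\|E(e^{i\theta})-E(e^{i\theta'})\|\le C(E)|\theta-\theta'|^{\alpha}$ for all $\theta,\theta'\in[0,2\pi)$. $K:L^2(\mathbb{T},\mu)\to\mathcal{H}$, $Kf=\int f(\lambda)E(\lambda)\,d\mu(\lambda)$, and $R=KK^*$; equivalently $\langle RT^{*n}x,y\rangle=\int_{\mathbb{T}}\lambda^n\langle x,E(\lambda)\rangle\overline{\langle y,E(\lambda)\rangle}\,d\mu(\lambda)$. *)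

theory Defs
  imports "HOL-Analysis.Analysis"
begin

text \<open>The inner product is conjugate-linear
  in the first and linear in the second variable.\<close>

class complex_vector = real_vector +
  fixes scaleC :: "complex \<Rightarrow> 'a \<Rightarrow> 'a" (infixr \<open>*\<^sub>C\<close> 75)
  assumes scaleC_add_right: "a *\<^sub>C (x + y) = a *\<^sub>C x + a *\<^sub>C y"
    and scaleC_add_left: "(a + b) *\<^sub>C x = a *\<^sub>C x + b *\<^sub>C x"
    and scaleC_scaleC: "a *\<^sub>C (b *\<^sub>C x) = (a * b) *\<^sub>C x"
    and scaleC_one: "1 *\<^sub>C x = x"
    and scaleR_scaleC: "r *\<^sub>R x = (complex_of_real r) *\<^sub>C x"

class complex_inner = complex_vector + real_normed_vector +
  fixes cinner :: "'a \<Rightarrow> 'a \<Rightarrow> complex"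
  assumes cinner_commute: "cinner x y = cnj (cinner y x)"
    and cinner_add_right: "cinner x (y + z) = cinner x y + cinner x z"
    and cinner_scaleC_right: "cinner x (a *\<^sub>C y) = a * cinner x y"
    and cinner_ge_zero: "0 \<le> Re (cinner x x)"
    and cinner_eq_zero_iff: "cinner x x = 0 \<longleftrightarrow> x = 0"
    and norm_eq_sqrt_cinner: "norm x = sqrt (Re (cinner x x))"

class chilbert_space = complex_inner + complete_space

definition cspan :: "'a::complex_vector set \<Rightarrow> 'a set" where
  "cspan S = {y. \<exists>c. y = (\<Sum>s\<in>S. c s *\<^sub>C s)}"

definition infinite_dimensional :: "'a::complex_vector itself \<Rightarrow> bool" where
  "infinite_dimensional _ \<longleftrightarrow> (\<forall>S::'a set. finite S \<longrightarrow> (\<exists>x. x \<notin> cspan S))"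

definition bounded_clinear_op :: "('a::complex_inner \<Rightarrow> 'a) \<Rightarrow> bool" where
  "bounded_clinear_op T \<longleftrightarrow>
     (\<forall>x y. T (x + y) = T x + T y) \<and> (\<forall>a x. T (a *\<^sub>C x) = a *\<^sub>C T x) \<and>
     (\<exists>K. \<forall>x. norm (T x) \<le> K * norm x)"

definition cadjoint :: "('a::complex_inner \<Rightarrow> 'a) \<Rightarrow> ('a \<Rightarrow> 'a)" where
  "cadjoint T = (THE S. \<forall>x y. cinner (S x) y = cinner x (T y))"

definition circle_measure :: "complex measure" where
  "circle_measure = distr (uniform_measure lborel {0..2*pi})
                          (restrict_space borel (sphere 0 1)) cis"

definition T_eigenvector_field :: "('a::complex_inner \<Rightarrow> 'a) \<Rightarrow> (complex \<Rightarrow> 'a) \<Rightarrow> bool" where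
  "T_eigenvector_field T E \<longleftrightarrow>
     (\<exists>B. \<forall>z\<in>sphere 0 1. norm (E z) \<le> B) \<and>
     (\<forall>z\<in>sphere 0 1. T (E z) = z *\<^sub>C E z)"

definition holderian :: "real \<Rightarrow> (complex \<Rightarrow> 'a::real_normed_vector) \<Rightarrow> bool" where
  "holderian \<alpha> E \<longleftrightarrow> (\<exists>C>0. \<forall>\<theta>\<in>{0..<2*pi}. \<forall>\<theta>'\<in>{0..<2*pi}.
      norm (E (cis \<theta>) - E (cis \<theta>')) \<le> C * \<bar>\<theta> - \<theta>'\<bar> powr \<alpha>)"

text \<open>\<open>R = K K^*\<close>, where \<open>K f = \<integral> f(\<lambda>) E(\<lambda>) d\<mu>\<close>; since \<open>(K^* y)(\<lambda>) = \<langle>E(\<lambda>), y\<rangle>\<close>,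
  \<open>R y = \<integral> \<langle>E(\<lambda>), y\<rangle> E(\<lambda>) d\<mu>(\<lambda>)\<close> (Bochner integral).\<close>
definition R_op :: "(complex \<Rightarrow> 'a::{chilbert_space, second_countable_topology}) \<Rightarrow> 'a \<Rightarrow> 'a" where
  "R_op E y = integral\<^sup>L circle_measure (\<lambda>z. cinner (E z) y *\<^sub>C E z)"

end

theory Submission
  imports Defs
begin

text \<open>Since \<open>T E(\<lambda>) = \<lambda> E(\<lambda>)\<close>, we have \<open>\<langle>T\<^sup>*\<^sup>n x, E(\<lambda>)\<rangle> = \<lambda>\<^sup>n \<langle>x, E(\<lambda>)\<rangle>\<close>, so
  \<open>\<langle>R T\<^sup>*\<^sup>n x, y\<rangle> = (2\<pi>)\<^sup>-\<^sup>1 \<integral>\<^sub>0\<^sup>2\<^sup>\<pi> e\<^sup>i\<^sup>n\<^sup>t f(t) dt\<close> is a Fourier coefficient of the bounded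
  \<open>\<alpha>\<close>-Hoelder function \<open>f(t) = \<langle>x, E(e\<^sup>i\<^sup>t)\<rangle> \<langle>E(e\<^sup>i\<^sup>t), y\<rangle>\<close>, with Hoelder constant
  \<open>2 \<parallel>E\<parallel>\<^sub>\<infinity> C(E) \<parallel>x\<parallel> \<parallel>y\<parallel>\<close>. Shifting \<open>t\<close> by \<open>\<pi>/n\<close> changes the sign of \<open>e\<^sup>i\<^sup>n\<^sup>t\<close>, so
  twice the integral is the integral of \<open>e\<^sup>i\<^sup>n\<^sup>t (f(t) - f(t + \<pi>/n))\<close> up to two pieces of
  length \<open>\<pi>/n\<close>, which gives the bound \<open>O(n\<^sup>-\<^sup>\<alpha>)\<close>.

  The adjoint \<open>T\<^sup>*\<close> is only given by a definite description, so its defining property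
  has to be established; this is the Riesz representation theorem, obtained by the classical
  argument that a maximising sequence for \<open>|\<phi>|\<close> on the unit ball is Cauchy.\<close>

section \<open>Complex inner product spaces\<close>

lemma cinner_zero_right [simp]: "cinner x (0::'a::complex_inner) = 0"
  using cinner_add_right[of x "0::'a" 0] by simp

lemma cinner_zero_left [simp]: "cinner (0::'a::complex_inner) x = 0"
  by (subst cinner_commute) simp

lemma cinner_add_left: "cinner (x + y) (z::'a::complex_inner) = cinner x z + cinner y z"
  by (subst (1 2 3) cinner_commute) (simp add: cinner_add_right)

lemma cinner_scaleC_left: "cinner (a *\<^sub>C x) (y::'a::complex_inner) = cnj a * cinner x y"
  by (subst (1 2) cinner_commute) (simp add: cinner_scaleC_right)

lemma cinner_scaleR_right: "cinner x (r *\<^sub>R (y::'a::complex_inner)) = of_real r * cinner x y"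
  by (simp add: scaleR_scaleC cinner_scaleC_right)

lemma cinner_scaleR_left: "cinner (r *\<^sub>R x) (y::'a::complex_inner) = of_real r * cinner x y"
  by (simp add: scaleR_scaleC cinner_scaleC_left)

lemma cinner_diff_right: "cinner x (y - (z::'a::complex_inner)) = cinner x y - cinner x z"
  using cinner_add_right[of x y "-z"] cinner_scaleR_right[of x "-1" z] by simp

lemma cinner_diff_left: "cinner (x - y) (z::'a::complex_inner) = cinner x z - cinner y z"
  using cinner_add_left[of x "-y" z] cinner_scaleR_left[of "-1" y z] by simp

lemma scaleC_zero_left [simp]: "0 *\<^sub>C (x::'a::complex_vector) = 0"
  using scaleC_add_left[of 0 0 x] by simp

lemma cinner_self: "cinner x (x::'a::complex_inner) = of_real ((norm x)\<^sup>2)"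
proof -
  have "Im (cinner x x) = - Im (cinner x x)"
    using arg_cong[OF cinner_commute[of x x], of Im] by simp
  moreover have "Re (cinner x x) = (norm x)\<^sup>2"
    using norm_eq_sqrt_cinner[of x] cinner_ge_zero[of x] by simp
  ultimately show ?thesis by (simp add: complex_eq_iff)
qed

lemma norm_scaleC: "norm (a *\<^sub>C (x::'a::complex_inner)) = cmod a * norm x"
proof -
  have "of_real ((norm (a *\<^sub>C x))\<^sup>2) = cinner (a *\<^sub>C x) (a *\<^sub>C x)"
    by (rule cinner_self[symmetric])
  also have "\<dots> = (cnj a * a) * cinner x x"
    by (simp add: cinner_scaleC_left cinner_scaleC_right)
  also have "cnj a * a = of_real ((cmod a)\<^sup>2)"
    by (metis complex_norm_square mult.commute of_real_power)
  also have "of_real ((cmod a)\<^sup>2) * cinner x x = (of_real ((cmod a * norm x)\<^sup>2) :: complex)"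
    by (simp add: cinner_self power_mult_distrib)
  finally have "(norm (a *\<^sub>C x))\<^sup>2 = (cmod a * norm x)\<^sup>2"
    using of_real_eq_iff by blast
  thus ?thesis by (simp add: power2_eq_iff_nonneg)
qed

lemma norm_add_square:
  "(norm (x + y::'a::complex_inner))\<^sup>2 = (norm x)\<^sup>2 + (norm y)\<^sup>2 + 2 * Re (cinner x y)"
proof -
  have "of_real ((norm (x + y))\<^sup>2) = cinner (x + y) (x + y)"
    by (rule cinner_self[symmetric])
  also have "\<dots> = cinner x x + cinner y y + (cinner x y + cinner y x)"
    by (simp add: cinner_add_left cinner_add_right)
  also have "cinner x y + cinner y x = of_real (2 * Re (cinner x y))"
    by (subst (2) cinner_commute) (simp add: complex_add_cnj)
  finally have "of_real ((norm (x + y))\<^sup>2) =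
      (of_real ((norm x)\<^sup>2 + (norm y)\<^sup>2 + 2 * Re (cinner x y)) :: complex)"
    by (simp add: cinner_self)
  thus ?thesis using of_real_eq_iff by blast
qed

lemma parallelogram_law:
  "(norm (x + y))\<^sup>2 + (norm (x - y))\<^sup>2 = 2 * (norm x)\<^sup>2 + 2 * (norm (y::'a::complex_inner))\<^sup>2"
proof -
  have "cinner x (- y) = - cinner x y"
    using cinner_scaleR_right[of x "-1" y] by simp
  thus ?thesis
    using norm_add_square[of x y] norm_add_square[of x "- y"] by simp
qed

lemma cauchy_schwarz: "cmod (cinner x (y::'a::complex_inner)) \<le> norm x * norm y"
proof (cases "x = 0")
  case True then show ?thesis by simp
next
  case False
  hence nx: "norm x > 0" by simp
  define a where "a = cinner x y / of_real ((norm x)\<^sup>2)"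
  define z where "z = y - a *\<^sub>C x"
  have "cinner x z = 0" using nx
    by (simp add: z_def a_def cinner_diff_right cinner_scaleC_right cinner_self)
  hence "cinner (a *\<^sub>C x) z = 0" by (simp add: cinner_scaleC_left)
  moreover have "y = a *\<^sub>C x + z" by (simp add: z_def)
  ultimately have "(norm y)\<^sup>2 = (cmod a * norm x)\<^sup>2 + (norm z)\<^sup>2"
    using norm_add_square[of "a *\<^sub>C x" z] by (simp add: norm_scaleC)
  hence "(cmod a * norm x)\<^sup>2 \<le> (norm y)\<^sup>2" by simp
  hence "cmod a * norm x \<le> norm y" by (rule power2_le_imp_le) simp
  moreover have "cmod a = cmod (cinner x y) / (norm x)\<^sup>2"
    by (simp add: a_def norm_divide del: of_real_power)
  ultimately have "cmod (cinner x y) / norm x \<le> norm y"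
    using nx by (simp add: power2_eq_square)
  thus ?thesis using nx by (simp add: pos_divide_le_eq mult.commute)
qed

lemma bounded_linear_cinner_left: "bounded_linear (\<lambda>v::'a::complex_inner. cinner v y)"
proof (rule bounded_linear_intro[where K = "norm y"])
  show "cinner (u + v) y = cinner u y + cinner v y" for u v
    by (rule cinner_add_left)
  show "cinner (r *\<^sub>R v) y = r *\<^sub>R cinner v y" for r v
    by (simp add: cinner_scaleR_left scaleR_conv_of_real)
  show "cmod (cinner v y) \<le> norm v * norm y" for v
    by (rule cauchy_schwarz)
qed

lemma norm_cinner_mult_cinner_le:
  assumes "norm a \<le> B"
  shows "cmod (cinner x a * cinner a y) \<le> B\<^sup>2 * norm x * norm (y::'a::complex_inner)"
proof -
  have B: "0 \<le> B"
    using assms norm_ge_zero[of a] by linarith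
  have "cmod (cinner x a * cinner a y) = cmod (cinner x a) * cmod (cinner a y)"
    by (rule norm_mult)
  also have "\<dots> \<le> (norm x * B) * (B * norm y)"
  proof (rule mult_mono)
    show "cmod (cinner x a) \<le> norm x * B"
      using cauchy_schwarz[of x a] assms by (meson mult_left_mono norm_ge_zero order_trans)
    show "cmod (cinner a y) \<le> B * norm y"
      using cauchy_schwarz[of a y] assms by (meson mult_right_mono norm_ge_zero order_trans)
  qed (simp_all add: B)
  also have "\<dots> = B\<^sup>2 * norm x * norm y"
    by (simp add: power2_eq_square)
  finally show ?thesis .
qed

lemma norm_cinner_mult_cinner_diff_le:
  assumes "norm a \<le> B" "norm b \<le> B"
  shows "cmod (cinner x a * cinner a y - cinner x b * cinner b y)
           \<le> 2 * B * norm (a - b) * norm x * norm (y::'a::complex_inner)"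
proof -
  have B: "0 \<le> B"
    using assms(1) norm_ge_zero[of a] by linarith
  have "cinner x a * cinner a y - cinner x b * cinner b y
      = cinner x (a - b) * cinner a y + cinner x b * cinner (a - b) y"
    by (simp add: cinner_diff_left cinner_diff_right algebra_simps)
  hence "cmod (cinner x a * cinner a y - cinner x b * cinner b y)
      \<le> cmod (cinner x (a - b)) * cmod (cinner a y) + cmod (cinner x b) * cmod (cinner (a - b) y)"
    by (metis norm_mult norm_triangle_ineq)
  also have "\<dots> \<le> (norm x * norm (a - b)) * (B * norm y) + (norm x * B) * (norm (a - b) * norm y)"
  proof (intro add_mono mult_mono)
    show "cmod (cinner a y) \<le> B * norm y"
      using cauchy_schwarz[of a y] assms(1) by (meson mult_right_mono norm_ge_zero order_trans)
    show "cmod (cinner x b) \<le> norm x * B"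
      using cauchy_schwarz[of x b] assms(2) by (meson mult_left_mono norm_ge_zero order_trans)
  qed (simp_all add: B cauchy_schwarz)
  also have "\<dots> = 2 * B * norm (a - b) * norm x * norm y"
    by (simp add: algebra_simps)
  finally show ?thesis .
qed

section \<open>The Riesz representation theorem and the adjoint\<close>

lemma clinear_functional_sup_approx:
  fixes \<phi> :: "'a::complex_inner \<Rightarrow> complex"
  assumes sc: "\<And>a x. \<phi> (a *\<^sub>C x) = a * \<phi> x"
    and bd: "\<And>x. cmod (\<phi> x) \<le> K * norm x"
  obtains M where "0 \<le> M" and "\<And>x. cmod (\<phi> x) \<le> M * norm x"
    and "\<And>e. 0 < e \<Longrightarrow> \<exists>y r. norm y \<le> 1 \<and> \<phi> y = of_real r \<and> M - e < r"
proof -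
  have \<phi>0: "\<phi> 0 = 0"
    using sc[of 0 0] by simp
  define A where "A = (\<lambda>x. cmod (\<phi> x)) ` {x. norm x \<le> 1}"
  have bdd: "bdd_above A"
    unfolding A_def
  proof (rule bdd_aboveI2[where M = "\<bar>K\<bar>"])
    fix x :: 'a assume "x \<in> {x. norm x \<le> 1}"
    hence "\<bar>K\<bar> * norm x \<le> \<bar>K\<bar>" by (simp add: mult_left_le)
    thus "cmod (\<phi> x) \<le> \<bar>K\<bar>"
      using bd[of x] abs_ge_self[of K] by (meson mult_right_mono norm_ge_zero order_trans)
  qed
  have Mup: "cmod (\<phi> x) \<le> Sup A" if "norm x \<le> 1" for x
    using that bdd by (intro cSup_upper) (auto simp: A_def)
  show ?thesis
  proof
    show "0 \<le> Sup A"
      using Mup[of 0] by (simp add: \<phi>0)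
    show "cmod (\<phi> x) \<le> Sup A * norm x" for x
    proof (cases "x = 0")
      case True then show ?thesis by (simp add: \<phi>0)
    next
      case False
      hence nx: "norm x > 0" by simp
      have "cmod (\<phi> ((1 / norm x) *\<^sub>R x)) \<le> Sup A"
        using nx by (intro Mup) simp
      hence "cmod (\<phi> x) / norm x \<le> Sup A"
        using nx by (simp add: scaleR_scaleC sc norm_divide)
      thus ?thesis using nx by (simp add: pos_divide_le_eq)
    qed
    show "\<exists>y r. norm y \<le> 1 \<and> \<phi> y = of_real r \<and> Sup A - e < r" if e: "0 < e" for e
    proof -
      have "A \<noteq> {}" by (auto simp: A_def intro!: exI[of _ "0::'a"])
      then obtain x where x: "norm x \<le> 1" "Sup A - e < cmod (\<phi> x)"
        using less_cSup_iff[OF _ bdd, of "Sup A - e"] e unfolding A_def by auto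
      \<comment> \<open>rotate \<open>x\<close> so that \<open>\<phi>\<close> takes a nonnegative real value\<close>
      define u where "u = (if \<phi> x = 0 then 1 else cnj (\<phi> x) / of_real (cmod (\<phi> x)))"
      have "cmod u = 1"
        by (simp add: u_def norm_divide)
      moreover have "u * \<phi> x = of_real (cmod (\<phi> x))"
      proof (cases "\<phi> x = 0")
        case False
        have "cnj (\<phi> x) * \<phi> x = of_real (cmod (\<phi> x)) * of_real (cmod (\<phi> x))"
          by (metis complex_norm_square mult.commute of_real_mult power2_eq_square)
        thus ?thesis using False by (simp add: u_def)
      qed (simp add: u_def)
      ultimately show ?thesis
        using x by (intro exI[of _ "u *\<^sub>C x"] exI[of _ "cmod (\<phi> x)"]) (simp add: sc norm_scaleC)
    qed
  qed
qed

lemma norm_diff_square_le_of_almost_norming: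
  fixes \<phi> :: "'a::complex_inner \<Rightarrow> complex"
  assumes add: "\<And>x y. \<phi> (x + y) = \<phi> x + \<phi> y"
    and bd: "\<And>x. cmod (\<phi> x) \<le> M * norm x" and M: "0 < M"
    and y: "norm y \<le> 1" "\<phi> y = of_real a"
    and z: "norm z \<le> 1" "\<phi> z = of_real b"
  shows "(norm (y - z))\<^sup>2 \<le> 4 * ((2 * M - (a + b)) / M)"
proof -
  define d where "d = (2 * M - (a + b)) / M"
  have "(norm y)\<^sup>2 \<le> 1" "(norm z)\<^sup>2 \<le> 1"
    using y z by (simp_all add: power_le_one)
  hence yz: "(norm (y - z))\<^sup>2 \<le> 4 - (norm (y + z))\<^sup>2"
    using parallelogram_law[of y z] by simp
  have "M * (2 - d) = a + b"
    using M by (simp add: d_def field_simps)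
  also have "\<dots> \<le> cmod (\<phi> (y + z))"
    by (simp add: add y z del: of_real_add flip: of_real_add)
  also have "\<dots> \<le> M * norm (y + z)" by (rule bd)
  finally have "M * (2 - d) \<le> M * norm (y + z)" .
  hence "2 - d \<le> norm (y + z)"
    using M by simp
  show ?thesis
  proof (cases "2 - d \<le> 0")
    case True
    thus ?thesis using yz zero_le_power2[of "norm (y + z)"] unfolding d_def[symmetric] by linarith
  next
    case False
    hence "(2 - d)\<^sup>2 \<le> (norm (y + z))\<^sup>2"
      using \<open>2 - d \<le> norm (y + z)\<close> by (intro power_mono) auto
    hence "(norm (y - z))\<^sup>2 \<le> 4 * d - d\<^sup>2"
      using yz by (simp add: power2_eq_square algebra_simps)
    thus ?thesis unfolding d_def[symmetric] by (smt (verit) zero_le_power2)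
  qed
qed

lemma norming_vector_exists:
  fixes \<phi> :: "'a::chilbert_space \<Rightarrow> complex"
  assumes add: "\<And>x y. \<phi> (x + y) = \<phi> x + \<phi> y"
    and sc: "\<And>a x. \<phi> (a *\<^sub>C x) = a * \<phi> x"
    and bd: "\<And>x. cmod (\<phi> x) \<le> M * norm x" and M: "0 < M"
    and approx: "\<And>e. 0 < e \<Longrightarrow> \<exists>y r. norm y \<le> 1 \<and> \<phi> y = of_real r \<and> M - e < r"
  obtains L where "norm L = 1" and "\<phi> L = of_real M"
proof -
  have lin: "bounded_linear \<phi>"
  proof (rule bounded_linear_intro[where K = M])
    show "\<phi> (r *\<^sub>R x) = r *\<^sub>R \<phi> x" for r x
      by (simp add: scaleR_scaleC sc scaleR_conv_of_real)
  qed (simp_all add: add bd mult.commute)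
  obtain Y r where Y: "\<And>k. norm (Y k) \<le> 1" "\<And>k. \<phi> (Y k) = of_real (r k)"
    and r: "\<And>k. M - 1 / Suc k < r k"
    using approx[of "1 / Suc _"] by (metis of_nat_0_less_iff zero_less_Suc zero_less_divide_1_iff)
  have r_le: "r k \<le> M" for k
  proof -
    have "\<bar>r k\<bar> \<le> M * norm (Y k)"
      using bd[of "Y k"] Y(2)[of k] by simp
    moreover have "M * norm (Y k) \<le> M"
      using Y(1)[of k] M by (simp add: mult_left_le)
    ultimately show ?thesis by linarith
  qed
  have "r \<longlonglongrightarrow> M"
  proof (rule tendsto_sandwich[where f = "\<lambda>k. M - 1 / Suc k" and h = "\<lambda>_. M"])
    show "(\<lambda>k. M - 1 / Suc k) \<longlonglongrightarrow> M"
      using LIMSEQ_inverse_real_of_nat_add_minus[of M] by (simp add: inverse_eq_divide)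
    show "\<forall>\<^sub>F k in sequentially. M - 1 / Suc k \<le> r k"
      using r by (simp add: less_imp_le)
  qed (simp_all add: r_le)
  have "Cauchy Y"
  proof (rule CauchyI)
    fix e :: real assume e: "0 < e"
    have "0 < M * e\<^sup>2 / 8" using M e by simp
    hence "\<forall>\<^sub>F k in sequentially. \<bar>r k - M\<bar> < M * e\<^sup>2 / 8"
      using \<open>r \<longlonglongrightarrow> M\<close> unfolding tendsto_iff dist_real_def by blast
    hence "\<forall>\<^sub>F k in sequentially. M - r k < M * e\<^sup>2 / 8"
      by (rule eventually_mono) linarith
    then obtain N where N: "\<And>k. k \<ge> N \<Longrightarrow> M - r k < M * e\<^sup>2 / 8"
      by (auto simp: eventually_sequentially)
    have "norm (Y j - Y k) < e" if "j \<ge> N" "k \<ge> N" for j k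
    proof -
      have "(norm (Y j - Y k))\<^sup>2 \<le> 4 * ((2 * M - (r j + r k)) / M)"
        by (rule norm_diff_square_le_of_almost_norming[OF add bd M]) (use Y in auto)
      also have "\<dots> < 4 * ((M * e\<^sup>2 / 4) / M)"
        using N[OF \<open>j \<ge> N\<close>] N[OF \<open>k \<ge> N\<close>] M by (intro mult_strict_left_mono divide_strict_right_mono) auto
      also have "\<dots> = e\<^sup>2"
        using M by simp
      finally show ?thesis
        using e by (simp add: power_less_imp_less_base)
    qed
    thus "\<exists>N. \<forall>j\<ge>N. \<forall>k\<ge>N. norm (Y j - Y k) < e" by blast
  qed
  then obtain L where L: "Y \<longlonglongrightarrow> L"
    using Cauchy_convergent_iff convergent_def by blast
  have "(\<lambda>k. \<phi> (Y k)) \<longlonglongrightarrow> of_real M"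
    using tendsto_of_real[OF \<open>r \<longlonglongrightarrow> M\<close>] by (simp add: Y)
  hence \<phi>L: "\<phi> L = of_real M"
    using bounded_linear.tendsto[OF lin L] LIMSEQ_unique by blast
  have "norm L \<le> 1"
    using tendsto_norm[OF L] Y by (intro LIMSEQ_le_const2) auto
  moreover have "M \<le> M * norm L"
    using bd[of L] \<phi>L M by simp
  ultimately show ?thesis
    using that \<phi>L M by simp
qed

lemma norming_vector_orthogonal:
  fixes \<phi> :: "'a::complex_inner \<Rightarrow> complex"
  assumes add: "\<And>x y. \<phi> (x + y) = \<phi> x + \<phi> y"
    and sc: "\<And>a x. \<phi> (a *\<^sub>C x) = a * \<phi> x"
    and bd: "\<And>x. cmod (\<phi> x) \<le> M * norm x" and M: "0 < M"
    and L: "norm L = 1" "\<phi> L = of_real M"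
    and h: "cinner L h = 0"
  shows "\<phi> h = 0"
proof (rule ccontr)
  assume "\<phi> h \<noteq> 0"
  define c where "c = \<phi> h"
  define a where "a = (cmod c)\<^sup>2"
  define b where "b = (norm h)\<^sup>2"
  have a: "0 < a" using \<open>\<phi> h \<noteq> 0\<close> by (simp add: a_def c_def)
  have b: "0 \<le> b" by (simp add: b_def)
  \<comment> \<open>moving from \<open>L\<close> towards \<open>h\<close> increases \<open>\<phi>\<close> to first order but the norm only to second order\<close>
  define t where "t = 1 / (M * (b + 1))"
  have t: "0 < t" using M b by (simp add: t_def)
  define v where "v = L + (of_real t * cnj c) *\<^sub>C h"
  have "\<phi> v = of_real M + of_real t * (cnj c * c)"
    by (simp add: v_def add sc L c_def)
  also have "cnj c * c = of_real a"
    unfolding a_def by (metis complex_norm_square mult.commute of_real_power)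
  finally have \<phi>v: "\<phi> v = of_real (M + t * a)" by simp
  have "(norm v)\<^sup>2 = 1 + (cmod (of_real t * cnj c) * norm h)\<^sup>2"
    by (simp add: v_def norm_add_square norm_scaleC L cinner_scaleC_right h)
  also have "(cmod (of_real t * cnj c) * norm h)\<^sup>2 = t\<^sup>2 * a * b"
    using t by (simp add: norm_mult a_def b_def power_mult_distrib)
  finally have nv: "(norm v)\<^sup>2 = 1 + t\<^sup>2 * a * b" .
  have "cmod (\<phi> v) = M + t * a"
    unfolding \<phi>v norm_of_real using t a M by simp
  hence "M + t * a \<le> M * norm v"
    using bd[of v] by simp
  hence "(M + t * a)\<^sup>2 \<le> M\<^sup>2 * (1 + t\<^sup>2 * a * b)"
    using t a M by (metis nv power_mono power_mult_distrib add_pos_pos mult_pos_pos less_imp_le)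
  hence "(t * a) * (2 * M + t * a) \<le> (t * a) * (M * (M * t) * b)"
    by (simp add: power2_eq_square algebra_simps)
  hence "2 * M + t * a \<le> M * (M * t) * b"
    using t a by simp
  also have "M * (M * t) * b = M * (b / (b + 1))"
    using M by (simp add: t_def)
  also have "\<dots> \<le> M"
    using M b by (intro mult_left_le) auto
  finally show False
    using mult_pos_pos[OF t a] M by linarith
qed

lemma riesz_representation:
  fixes \<phi> :: "'a::chilbert_space \<Rightarrow> complex"
  assumes add: "\<And>x y. \<phi> (x + y) = \<phi> x + \<phi> y"
    and sc: "\<And>a x. \<phi> (a *\<^sub>C x) = a * \<phi> x"
    and bd: "\<And>x. cmod (\<phi> x) \<le> K * norm x"
  obtains u where "\<And>y. \<phi> y = cinner u y"
proof -
  obtain M where M: "0 \<le> M" and Mb: "\<And>x. cmod (\<phi> x) \<le> M * norm x"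
    and approx: "\<And>e. 0 < e \<Longrightarrow> \<exists>y r. norm y \<le> 1 \<and> \<phi> y = of_real r \<and> M - e < r"
    using clinear_functional_sup_approx[OF sc bd] by blast
  show ?thesis
  proof (cases "M = 0")
    case True
    thus ?thesis using Mb that[of 0] by simp
  next
    case False
    hence M: "0 < M" using M by simp
    obtain L where L: "norm L = 1" "\<phi> L = of_real M"
      using norming_vector_exists[OF add sc Mb M approx] by blast
    have "\<phi> y = cinner (of_real M *\<^sub>C L) y" for y
    proof -
      have LL: "cinner L L = 1"
        using cinner_self[of L] L by simp
      define h where "h = y - cinner L y *\<^sub>C L"
      have "cinner L h = 0"
        by (simp add: h_def cinner_diff_right cinner_scaleC_right LL)
      hence "\<phi> h = 0"
        by (rule norming_vector_orthogonal[OF add sc Mb M L])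
      have "\<phi> y = \<phi> (cinner L y *\<^sub>C L + h)"
        by (simp add: h_def)
      also have "\<dots> = cinner L y * of_real M"
        by (simp add: add sc L(2) \<open>\<phi> h = 0\<close>)
      finally show ?thesis by (simp add: cinner_scaleC_left)
    qed
    thus ?thesis by (rule that)
  qed
qed

lemma cinner_cadjoint:
  fixes T :: "'a::chilbert_space \<Rightarrow> 'a"
  assumes "bounded_clinear_op T"
  shows "cinner (cadjoint T x) y = cinner x (T y)"
proof -
  from assms obtain K where add: "\<And>x y. T (x + y) = T x + T y"
    and sc: "\<And>a x. T (a *\<^sub>C x) = a *\<^sub>C T x" and K: "\<And>x. norm (T x) \<le> K * norm x"
    unfolding bounded_clinear_op_def by blast
  have "\<forall>x. \<exists>u. \<forall>y. cinner u y = cinner x (T y)"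
  proof
    fix x
    have bd: "cmod (cinner x (T y)) \<le> (norm x * K) * norm y" for y
    proof -
      have "cmod (cinner x (T y)) \<le> norm x * norm (T y)" by (rule cauchy_schwarz)
      also have "\<dots> \<le> norm x * (K * norm y)" by (intro mult_left_mono K) simp
      finally show ?thesis by (simp add: mult.assoc)
    qed
    obtain u where "\<And>y. cinner x (T y) = cinner u y"
      by (rule riesz_representation[of "\<lambda>y. cinner x (T y)", OF _ _ bd])
         (simp_all add: add sc cinner_add_right cinner_scaleC_right)
    thus "\<exists>u. \<forall>y. cinner u y = cinner x (T y)" by auto
  qed
  then obtain S where S: "\<And>x y. cinner (S x) y = cinner x (T y)"
    using choice[of "\<lambda>x u. \<forall>y. cinner u y = cinner x (T y)"] by blast
  have "cadjoint T = S"
    unfolding cadjoint_def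
  proof (rule the_equality)
    show "\<forall>x y. cinner (S x) y = cinner x (T y)" by (simp add: S)
    show "S' = S" if "\<forall>x y. cinner (S' x) y = cinner x (T y)" for S'
    proof
      fix x
      have "cinner (S' x - S x) (S' x - S x) = 0"
        using that S by (simp add: cinner_diff_left)
      thus "S' x = S x" by (simp add: cinner_eq_zero_iff)
    qed
  qed
  thus ?thesis by (simp add: S)
qed

lemma cinner_cadjoint_pow_eigenvector:
  fixes T :: "'a::chilbert_space \<Rightarrow> 'a"
  assumes "bounded_clinear_op T" "T v = z *\<^sub>C v"
  shows "cinner ((cadjoint T ^^ n) x) v = z ^ n * cinner x v"
proof (induction n)
  case (Suc n)
  have "cinner ((cadjoint T ^^ Suc n) x) v = cinner ((cadjoint T ^^ n) x) (T v)"
    by (simp add: cinner_cadjoint[OF assms(1)])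
  thus ?case by (simp add: assms(2) cinner_scaleC_right Suc)
qed simp

section \<open>Decay of Fourier coefficients of Hoelder functions\<close>

lemma bounded_integrable_on_Icc:
  fixes F :: "real \<Rightarrow> complex"
  assumes "F \<in> borel_measurable lborel" "\<And>t. cmod (F t) \<le> K"
  shows "set_integrable lborel {a..b} F" and "F integrable_on {a..b}"
proof -
  show *: "set_integrable lborel {a..b} F"
    unfolding set_integrable_def
    by (rule integrableI_bounded_set_indicator[where B = K])
       (use assms emeasure_compact_finite[of "{a..b}"] in auto)
  show "F integrable_on {a..b}"
    by (rule set_borel_integral_eq_integral(1)[OF *])
qed

lemma integral_uniform_measure_Icc:
  fixes F :: "real \<Rightarrow> complex"
  assumes F: "F \<in> borel_measurable lborel" "\<And>t. cmod (F t) \<le> K" and "a < b"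
  shows "integral\<^sup>L (uniform_measure lborel {a..b}) F = integral {a..b} F / of_real (b - a)"
proof -
  have density: "indicator {a..b} t / emeasure lborel {a..b} = ennreal (indicator {a..b} t / (b - a))"
    for t
    using \<open>a < b\<close> divide_ennreal[of 1 "b - a"] by (cases "t \<in> {a..b}") auto
  have "integral\<^sup>L (uniform_measure lborel {a..b}) F
      = integral\<^sup>L lborel (\<lambda>t. (indicator {a..b} t / (b - a)) *\<^sub>R F t)"
    unfolding uniform_measure_def density
    by (rule integral_density) (use F \<open>a < b\<close> in \<open>auto intro!: AE_I2\<close>)
  also have "\<dots> = integral\<^sup>L lborel (\<lambda>t. (1 / (b - a)) *\<^sub>R (indicator {a..b} t *\<^sub>R F t))"
    by (simp add: divide_inverse mult.commute)
  also have "\<dots> = (1 / (b - a)) *\<^sub>R set_lebesgue_integral lborel {a..b} F"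
    unfolding set_lebesgue_integral_def by (rule integral_scaleR_right)
  also have "set_lebesgue_integral lborel {a..b} F = integral {a..b} F"
    by (rule set_borel_integral_eq_integral(2)[OF bounded_integrable_on_Icc(1)[OF F]])
  finally show ?thesis
    by (simp add: scaleR_conv_of_real divide_inverse mult.commute)
qed

text \<open>If shifting by \<open>h\<close> nearly changes the sign of \<open>F\<close>, the integral of \<open>F\<close> over a period
  is small: averaging \<open>\<integral>F\<close> with the shifted integral leaves only \<open>F(t) + F(t + h)\<close> and two
  boundary pieces of length \<open>h\<close>.\<close>

lemma norm_integral_le_by_shift:
  fixes F :: "real \<Rightarrow> complex"
  assumes F: "F \<in> borel_measurable lborel" "\<And>t. cmod (F t) \<le> K"
    and h: "0 < h" "h < c"
    and shift: "\<And>t. 0 \<le> t \<Longrightarrow> t + h < c \<Longrightarrow> cmod (F t + F (t + h)) \<le> D"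
  shows "cmod (integral {0..c} F) \<le> h * K + c * D / 2"
proof -
  define I where "I = integral {0..c} F"
  have Fint: "F integrable_on {a..b}" for a b
    by (rule bounded_integrable_on_Icc(2)[OF F])
  have Fsh: "(\<lambda>t. F (t + h)) integrable_on {a..b}" for a b
    by (rule bounded_integrable_on_Icc(2)[where K = K]) (use F in auto)
  have K: "0 \<le> K"
    using F(2)[of 0] norm_ge_zero[of "F 0"] by linarith
  have "cmod (F 0 + F (0 + h)) \<le> D"
    using h by (intro shift) auto
  hence D: "0 \<le> D"
    using norm_ge_zero[of "F 0 + F (0 + h)"] by linarith
  have boundary: "cmod (integral {a..a + h} F) \<le> K * h" for a
    using has_integral_bound_real[OF K, of "{}" F _ a "a + h"] F(2) integrable_integral[OF Fint] h
    by auto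
  have "I = integral {0..h} F + integral {h..c} F"
    unfolding I_def by (rule Henstock_Kurzweil_Integration.integral_combine[symmetric]) (use h Fint in auto)
  moreover have "I = integral {0..c-h} F + integral {c-h..c} F"
    unfolding I_def by (rule Henstock_Kurzweil_Integration.integral_combine[symmetric]) (use h Fint in auto)
  moreover have "integral {0..c-h} (\<lambda>t. F (t + h)) = integral {h..c} F"
    using integral_shift_Icc_real[of 0 "c - h" F h] by (simp add: o_def add.commute)
  moreover have "integral {0..c-h} (\<lambda>t. F t + F (t + h))
      = integral {0..c-h} F + integral {0..c-h} (\<lambda>t. F (t + h))"
    by (intro integral_add Fint Fsh)
  ultimately have "2 * I = integral {0..c-h} (\<lambda>t. F t + F (t + h))
      + integral {c-h..c} F + integral {0..h} F"
    by simp
  hence "cmod (2 * I) \<le> cmod (integral {0..c-h} (\<lambda>t. F t + F (t + h)))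
      + cmod (integral {c-h..c} F) + cmod (integral {0..h} F)"
    by (simp add: order_trans[OF norm_triangle_ineq add_right_mono[OF norm_triangle_ineq]])
  also have "\<dots> \<le> D * (c - h) + K * h + K * h"
  proof (intro add_mono)
    show "cmod (integral {0..c-h} (\<lambda>t. F t + F (t + h))) \<le> D * (c - h)"
      using has_integral_bound_real[OF D, of "{c - h}" "\<lambda>t. F t + F (t + h)" _ 0 "c - h"]
        integrable_integral[OF integrable_add[OF Fint Fsh]] shift h by auto
    show "cmod (integral {c-h..c} F) \<le> K * h"
      using boundary[of "c - h"] by simp
    show "cmod (integral {0..h} F) \<le> K * h"
      using boundary[of 0] by simp
  qed
  also have "\<dots> \<le> D * c + 2 * (K * h)"
    using D h by (simp add: algebra_simps)
  finally show ?thesis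
    unfolding I_def by (simp add: norm_mult algebra_simps)
qed

lemma norm_integral_cis_pow_mult_holder_le:
  fixes f :: "real \<Rightarrow> complex" and n :: nat
  assumes meas: "(\<lambda>t. cis t ^ n * f t) \<in> borel_measurable lborel"
    and bound: "\<And>t. cmod (f t) \<le> K"
    and holder: "\<And>s t. s \<in> {0..<2*pi} \<Longrightarrow> t \<in> {0..<2*pi} \<Longrightarrow>
                   cmod (f s - f t) \<le> L * \<bar>s - t\<bar> powr \<alpha>"
    and "\<alpha> \<le> 1" "1 \<le> n"
  shows "cmod (integral {0..2*pi} (\<lambda>t. cis t ^ n * f t)) \<le> pi * (K + pi powr \<alpha> * L) / real n powr \<alpha>"
proof -
  define h where "h = pi / real n"
  have h: "0 < h" "h < 2 * pi"
    using \<open>1 \<le> n\<close> pi_gt_zero by (auto simp: h_def divide_less_eq)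
  have K: "0 \<le> K"
    using bound[of 0] norm_ge_zero[of "f 0"] by linarith
  have flip: "cis (t + h) ^ n = - (cis t ^ n)" for t
  proof -
    have "cis h ^ n = cis (real n * h)"
      by (rule Complex.DeMoivre)
    also have "real n * h = pi"
      using \<open>1 \<le> n\<close> by (simp add: h_def)
    finally have "cis h ^ n = -1" by simp
    thus ?thesis by (simp add: cis_mult[symmetric] power_mult_distrib)
  qed
  have "cmod (integral {0..2*pi} (\<lambda>t. cis t ^ n * f t)) \<le> h * K + 2 * pi * (L * h powr \<alpha>) / 2"
  proof (rule norm_integral_le_by_shift[OF meas _ h])
    show "cmod (cis t ^ n * f t) \<le> K" for t
      by (simp add: norm_mult norm_power bound)
    show "cmod (cis t ^ n * f t + cis (t + h) ^ n * f (t + h)) \<le> L * h powr \<alpha>"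
      if "0 \<le> t" "t + h < 2 * pi" for t
      using holder[of t "t + h"] that h
      by (simp add: flip norm_mult norm_power right_diff_distrib[symmetric])
  qed
  also have "\<dots> = pi * K / real n + pi * (pi powr \<alpha> * L) / real n powr \<alpha>"
    by (simp add: h_def powr_divide)
  also have "\<dots> \<le> pi * K / real n powr \<alpha> + pi * (pi powr \<alpha> * L) / real n powr \<alpha>"
    using powr_mono[OF \<open>\<alpha> \<le> 1\<close>, of "real n"] \<open>1 \<le> n\<close> K by (intro add_right_mono divide_left_mono) auto
  finally show ?thesis
    by (simp add: add_divide_distrib algebra_simps)
qed

section \<open>The operator \<open>R\<close>\<close>

lemma integral_circle_measure:
  fixes H :: "complex \<Rightarrow> complex"
  assumes H: "H \<in> borel_measurable circle_measure"
    and bound: "\<And>z. z \<in> sphere 0 1 \<Longrightarrow> cmod (H z) \<le> K"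
  shows "(\<lambda>t. H (cis t)) \<in> borel_measurable lborel"
    and "integral\<^sup>L circle_measure H = integral {0..2*pi} (\<lambda>t. H (cis t)) / (2 * pi)"
proof -
  have "sets circle_measure = sets (restrict_space borel (sphere (0::complex) 1))"
    by (simp add: circle_measure_def)
  hence Hm: "H \<in> borel_measurable (restrict_space borel (sphere 0 1))"
    using H unfolding measurable_cong_sets[OF _ refl] by simp
  have cis: "cis \<in> borel_measurable borel"
    by (intro borel_measurable_continuous_onI continuous_on_cis continuous_on_id)
  have cis_circle: "cis \<in> measurable M (restrict_space borel (sphere 0 1))"
    if "sets M = sets borel" for M :: "real measure"
  proof (rule measurable_restrict_space2)
    show "cis \<in> space M \<rightarrow> sphere 0 1" by simp
    show "cis \<in> borel_measurable M"
      using cis unfolding measurable_cong_sets[OF that refl] .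
  qed
  show Hcis: "(\<lambda>t. H (cis t)) \<in> borel_measurable lborel"
    by (rule measurable_compose[OF cis_circle Hm]) simp
  have "integral\<^sup>L circle_measure H = integral\<^sup>L (uniform_measure lborel {0..2*pi}) (\<lambda>t. H (cis t))"
    unfolding circle_measure_def by (rule integral_distr[OF cis_circle Hm]) simp
  also have "\<dots> = integral {0..2*pi} (\<lambda>t. H (cis t)) / (2 * pi)"
    using integral_uniform_measure_Icc[OF Hcis, of K 0 "2 * pi"] bound by simp
  finally show "integral\<^sup>L circle_measure H = integral {0..2*pi} (\<lambda>t. H (cis t)) / (2 * pi)" .
qed

lemma cinner_R_op_eq_integral:
  fixes E :: "complex \<Rightarrow> 'h::{chilbert_space, second_countable_topology}"
  assumes E: "\<And>z. z \<in> sphere 0 1 \<Longrightarrow> norm (E z) \<le> B"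
    and int: "integrable circle_measure (\<lambda>z. cinner (E z) w *\<^sub>C E z)"
  shows "(\<lambda>t. cinner w (E (cis t)) * cinner (E (cis t)) y) \<in> borel_measurable lborel"
    and "cinner (R_op E w) y
           = integral {0..2*pi} (\<lambda>t. cinner w (E (cis t)) * cinner (E (cis t)) y) / (2 * pi)"
    (is "_ = ?I")
proof -
  define H where "H = (\<lambda>z. cinner w (E z) * cinner (E z) y)"
  have H: "(\<lambda>z. cinner (cinner (E z) w *\<^sub>C E z) y) = H"
    by (simp add: H_def fun_eq_iff cinner_scaleC_left flip: cinner_commute)
  have Hm: "H \<in> borel_measurable circle_measure"
    using integrable_bounded_linear[OF bounded_linear_cinner_left int, of y]
    unfolding H by (rule borel_measurable_integrable)
  have Hb: "cmod (H z) \<le> B\<^sup>2 * norm w * norm y" if "z \<in> sphere 0 1" for z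
    unfolding H_def by (rule norm_cinner_mult_cinner_le[OF E[OF that]])
  note circle = integral_circle_measure[OF Hm Hb]
  show "(\<lambda>t. cinner w (E (cis t)) * cinner (E (cis t)) y) \<in> borel_measurable lborel"
    using circle(1) by (simp add: H_def)
  have "cinner (R_op E w) y = integral\<^sup>L circle_measure H"
    unfolding R_op_def H[symmetric]
    by (rule integral_bounded_linear[OF bounded_linear_cinner_left int, of y, symmetric])
  also have "\<dots> = ?I"
    using circle(2) by (simp add: H_def)
  finally show "cinner (R_op E w) y = ?I" .
qed

lemma norm_cinner_R_op_cadjoint_pow_le:
  fixes T :: "'h::{chilbert_space, second_countable_topology} \<Rightarrow> 'h" and E :: "complex \<Rightarrow> 'h"
  assumes T: "bounded_clinear_op T"
    and B: "\<And>z. z \<in> sphere 0 1 \<Longrightarrow> norm (E z) \<le> B"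
    and eig: "\<And>z. z \<in> sphere 0 1 \<Longrightarrow> T (E z) = z *\<^sub>C E z"
    and H: "0 \<le> H"
    and hol: "\<And>s t. s \<in> {0..<2*pi} \<Longrightarrow> t \<in> {0..<2*pi} \<Longrightarrow>
                norm (E (cis s) - E (cis t)) \<le> H * \<bar>s - t\<bar> powr \<alpha>"
    and "\<alpha> \<le> 1" "1 \<le> n"
  shows "cmod (cinner (R_op E ((cadjoint T ^^ n) x)) y)
           \<le> (B\<^sup>2 / 2 + pi powr \<alpha> * B * H) * norm x * norm y / real n powr \<alpha>"
proof -
  have "norm (E 1) \<le> B" by (rule B) simp
  hence B0: "0 \<le> B"
    using norm_ge_zero[of "E 1"] by linarith
  show ?thesis
  proof (cases "integrable circle_measure (\<lambda>z. cinner (E z) ((cadjoint T ^^ n) x) *\<^sub>C E z)")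
    case False
    \<comment> \<open>the Bochner integral defining \<open>R\<close> does not exist, so \<open>R\<close> is \<open>0\<close> by convention\<close>
    with False H B0 show ?thesis
      by (simp add: R_op_def not_integrable_integral_eq)
  next
    case True
    define f where "f t = cinner x (E (cis t)) * cinner (E (cis t)) y" for t
    have "(\<lambda>t. cinner ((cadjoint T ^^ n) x) (E (cis t)) * cinner (E (cis t)) y) = (\<lambda>t. cis t ^ n * f t)"
      by (simp add: f_def fun_eq_iff cinner_cadjoint_pow_eigenvector[OF T eig])
    note R = cinner_R_op_eq_integral[OF B True, of y, unfolded this]
    have "cmod (integral {0..2*pi} (\<lambda>t. cis t ^ n * f t))
        \<le> pi * (B\<^sup>2 * norm x * norm y + pi powr \<alpha> * (2 * B * H * norm x * norm y)) / real n powr \<alpha>"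
    proof (rule norm_integral_cis_pow_mult_holder_le[OF R(1) _ _ assms(6,7)])
      show "cmod (f t) \<le> B\<^sup>2 * norm x * norm y" for t
        unfolding f_def by (rule norm_cinner_mult_cinner_le) (simp add: B)
      show "cmod (f s - f t) \<le> 2 * B * H * norm x * norm y * \<bar>s - t\<bar> powr \<alpha>"
        if "s \<in> {0..<2*pi}" "t \<in> {0..<2*pi}" for s t
        using norm_cinner_mult_cinner_diff_le[OF B B, of "cis s" "cis t" x y]
          mult_left_mono[OF hol[OF that], of "2 * B * norm x * norm y"] B0
        by (simp add: f_def mult_ac)
    qed
    also have "\<dots> = 2 * pi * ((B\<^sup>2 / 2 + pi powr \<alpha> * B * H) * norm x * norm y / real n powr \<alpha>)"
      using \<open>1 \<le> n\<close> by (simp add: field_simps)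
    finally show ?thesis
      using R(2) pi_gt_zero by (simp add: norm_divide pos_divide_le_eq mult.commute)
  qed
qed

theorem proposition2p9:
  fixes T :: "'h::{chilbert_space, second_countable_topology} \<Rightarrow> 'h"
    and E :: "complex \<Rightarrow> 'h"
    and \<alpha> :: real
  assumes "infinite_dimensional TYPE('h)"
    and "bounded_clinear_op T"
    and "T_eigenvector_field T E"
    and "0 < \<alpha>" and "\<alpha> \<le> 1"
    and "holderian \<alpha> E"
  shows "\<exists>C>0. \<forall>x y. \<forall>n::nat. n \<ge> 1 \<longrightarrow>
           cmod (cinner (R_op E ((cadjoint T ^^ n) x)) y) \<le> C * norm x * norm y / real n powr \<alpha>"
proof -
  obtain B where B: "\<And>z. z \<in> sphere 0 1 \<Longrightarrow> norm (E z) \<le> B"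
    and eig: "\<And>z. z \<in> sphere 0 1 \<Longrightarrow> T (E z) = z *\<^sub>C E z"
    using assms(3) unfolding T_eigenvector_field_def by blast
  obtain H where H: "0 < H" and hol: "\<And>s t. s \<in> {0..<2*pi} \<Longrightarrow> t \<in> {0..<2*pi} \<Longrightarrow>
      norm (E (cis s) - E (cis t)) \<le> H * \<bar>s - t\<bar> powr \<alpha>"
    using assms(6) unfolding holderian_def by blast
  define C where "C = B\<^sup>2 / 2 + pi powr \<alpha> * B * H"
  have bound: "cmod (cinner (R_op E ((cadjoint T ^^ n) x)) y) \<le> C * norm x * norm y / real n powr \<alpha>"
    if "1 \<le> n" for x y n
    unfolding C_def using norm_cinner_R_op_cadjoint_pow_le[OF assms(2) B eig _ hol assms(5) that] H by simp
  have "norm (E 1) \<le> B" by (rule B) simp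
  hence "0 \<le> B"
    using norm_ge_zero[of "E 1"] by linarith
  hence "0 \<le> C"
    unfolding C_def using H by (intro add_nonneg_nonneg mult_nonneg_nonneg) auto
  hence "C * norm x * norm y / real n powr \<alpha> \<le> (C + 1) * norm x * norm y / real n powr \<alpha>" for x y n
    by (intro divide_right_mono mult_right_mono) auto
  hence "cmod (cinner (R_op E ((cadjoint T ^^ n) x)) y) \<le> (C + 1) * norm x * norm y / real n powr \<alpha>"
    if "1 \<le> n" for x y n
    using bound[OF that] order_trans by blast
  with \<open>0 \<le> C\<close> show ?thesis
    by (intro exI[of _ "C + 1"]) auto
qed

end
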